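(* Let $G$ be a fullerene graph, $C$ a longest cycle of $G$, and apply the discharging procedure described in the context. If $f=v_1v_2v_3v_4v_5v_6$ is a white face of $G$ such that the edges $v_4v_5$, $v_5v_6$ and $v_6v_1$ are contained in $C$, then the final amount of charge of $f$ is $1$ unit.
   Context: A fullerene graph is a cubic, planar, $3$-connected graph embedded in the plane in which every face has size five or six. Fix a longest cycle $C$ of $G$; vertices on $C$ are black, the others white. Every face of $G$ is incident with at most two white vertices. A face incident with exactly two white vertices is called white; a face incident with no white vertex is called black. For a face $f$ with vertices $v_1,\dots,v_k$ in cyclic order, $f_{i,i+1}$ denotes the face other than $f$ containing the edge $v_iv_{i+1}$ (indices modulo $k$). Discharging: each white vertex receives $3$ units of charge and sends $1$ unit to each of its three incident faces (so each face initially has charge equal to its number of incident white vertices). Then charge is redistributed by two rules, where $f_0=v_1\dots v_6$ is a black face of size six and indices are modulo $6$. Rule A: $f_0$ receives $1/2$ unit from $f_{i,i+1}$ if the path $v_{i-1}v_iv_{i+1}v_{i+2}$ is contained in $C$ and the face $f_{i,i+1}$ is white. Rule B: $f_0$ receives $1$ unit from $f_{i,i+1}$ if the edge $v_iv_{i+1}$ is contained in $C$, neither $v_{i-1}v_i$ nor $v_{i+1}v_{i+2}$ is contained in $C$, and the face $f_{i,i+1}$ is white. The final charge of a face is its initial charge plus all charge received minus all charge sent under Rules A and B. *)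

theory Defs
  imports Complex_Main
begin

text \<open>A graph is given by a vertex set V and a symmetric set E of directed pairs
(each undirected edge uv appears as (u,v) and (v,u), the darts).  A plane embedding
is given by a rotation system rot: rot v cyclically permutes the neighbours of v.
Faces are the orbits of the face-tracing permutation on darts; the embedding is
planar (spherical) iff Euler's formula holds for the connected graph.\<close>

definition nbrs :: "('a \<times> 'a) set \<Rightarrow> 'a \<Rightarrow> 'a set" where
  "nbrs E v = {u. (v, u) \<in> E}"

definition simple_graph :: "'a set \<Rightarrow> ('a \<times> 'a) set \<Rightarrow> bool" where
  "simple_graph V E \<longleftrightarrow> finite V \<and> E \<subseteq> V \<times> V \<and> sym E \<and> (\<forall>v. (v, v) \<notin> E)"

definition connected_set :: "('a \<times> 'a) set \<Rightarrow> 'a set \<Rightarrow> bool" where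
  "connected_set E W \<longleftrightarrow> (\<forall>u\<in>W. \<forall>v\<in>W. (u, v) \<in> (E \<inter> (W \<times> W))\<^sup>*)"

definition three_connected :: "'a set \<Rightarrow> ('a \<times> 'a) set \<Rightarrow> bool" where
  "three_connected V E \<longleftrightarrow> card V \<ge> 4 \<and>
     (\<forall>S. S \<subseteq> V \<longrightarrow> card S < 3 \<longrightarrow> connected_set E (V - S))"

definition cubic :: "'a set \<Rightarrow> ('a \<times> 'a) set \<Rightarrow> bool" where
  "cubic V E \<longleftrightarrow> (\<forall>v\<in>V. card (nbrs E v) = 3)"

definition rotation_system :: "'a set \<Rightarrow> ('a \<times> 'a) set \<Rightarrow> ('a \<Rightarrow> 'a \<Rightarrow> 'a) \<Rightarrow> bool" where
  "rotation_system V E rot \<longleftrightarrow>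
     (\<forall>v\<in>V. bij_betw (rot v) (nbrs E v) (nbrs E v) \<and>
        (\<forall>u\<in>nbrs E v. \<forall>w\<in>nbrs E v. \<exists>k. (rot v ^^ k) u = w))"

definition phi :: "('a \<Rightarrow> 'a \<Rightarrow> 'a) \<Rightarrow> 'a \<times> 'a \<Rightarrow> 'a \<times> 'a" where
  "phi rot d = (snd d, rot (snd d) (fst d))"

definition face_of :: "('a \<Rightarrow> 'a \<Rightarrow> 'a) \<Rightarrow> 'a \<times> 'a \<Rightarrow> ('a \<times> 'a) set" where
  "face_of rot d = {(phi rot ^^ k) d | k. True}"

definition faces :: "('a \<times> 'a) set \<Rightarrow> ('a \<Rightarrow> 'a \<Rightarrow> 'a) \<Rightarrow> ('a \<times> 'a) set set" where
  "faces E rot = face_of rot ` E"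

definition face_vertices :: "('a \<times> 'a) set \<Rightarrow> 'a set" where
  "face_vertices f = fst ` f"

definition plane_graph :: "'a set \<Rightarrow> ('a \<times> 'a) set \<Rightarrow> ('a \<Rightarrow> 'a \<Rightarrow> 'a) \<Rightarrow> bool" where
  "plane_graph V E rot \<longleftrightarrow> simple_graph V E \<and> connected_set E V \<and> rotation_system V E rot \<and>
     int (card V) - int (card E) div 2 + int (card (faces E rot)) = 2"

text \<open>Fullerene: cubic, plane, 3-connected, every face of size five or six
(the size of a face is the length of its boundary walk = number of its darts).\<close>
definition fullerene :: "'a set \<Rightarrow> ('a \<times> 'a) set \<Rightarrow> ('a \<Rightarrow> 'a \<Rightarrow> 'a) \<Rightarrow> bool" where
  "fullerene V E rot \<longleftrightarrow> plane_graph V E rot \<and> cubic V E \<and> three_connected V E \<and>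
     (\<forall>f\<in>faces E rot. card f = 5 \<or> card f = 6)"

definition is_cycle :: "'a set \<Rightarrow> ('a \<times> 'a) set \<Rightarrow> 'a list \<Rightarrow> bool" where
  "is_cycle V E cs \<longleftrightarrow> length cs \<ge> 3 \<and> distinct cs \<and> set cs \<subseteq> V \<and>
     (\<forall>i<length cs. (cs ! i, cs ! ((i + 1) mod length cs)) \<in> E)"

definition longest_cycle :: "'a set \<Rightarrow> ('a \<times> 'a) set \<Rightarrow> 'a list \<Rightarrow> bool" where
  "longest_cycle V E cs \<longleftrightarrow> is_cycle V E cs \<and> (\<forall>ds. is_cycle V E ds \<longrightarrow> length ds \<le> length cs)"

definition in_C :: "'a list \<Rightarrow> 'a \<times> 'a \<Rightarrow> bool" where
  "in_C cs d \<longleftrightarrow> (\<exists>i<length cs.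
      (cs ! i = fst d \<and> cs ! ((i + 1) mod length cs) = snd d) \<or>
      (cs ! i = snd d \<and> cs ! ((i + 1) mod length cs) = fst d))"

definition white_count :: "'a list \<Rightarrow> ('a \<times> 'a) set \<Rightarrow> nat" where
  "white_count cs f = card {v \<in> face_vertices f. v \<notin> set cs}"

definition white_face :: "'a list \<Rightarrow> ('a \<times> 'a) set \<Rightarrow> bool" where
  "white_face cs f \<longleftrightarrow> white_count cs f = 2"

definition black_face :: "'a list \<Rightarrow> ('a \<times> 'a) set \<Rightarrow> bool" where
  "black_face cs f \<longleftrightarrow> white_count cs f = 0"

text \<open>Amount that the black hexagonal face f0 receives from face g by Rules A and B.
For a dart d = (v_i, v_(i+1)) of f0, the previous dart is (v_(i-1), v_i) = phi^5 d
(f0 has six darts) and the next dart is (v_(i+1), v_(i+2)) = phi d; the face f_(i,i+1)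
is the face of the reversed dart (v_(i+1), v_i).\<close>
definition recv :: "('a \<Rightarrow> 'a \<Rightarrow> 'a) \<Rightarrow> 'a list \<Rightarrow> ('a \<times> 'a) set \<Rightarrow> ('a \<times> 'a) set \<Rightarrow> real" where
  "recv rot cs f0 g =
     (if black_face cs f0 \<and> card f0 = 6 then
        (\<Sum>d\<in>f0.
           let prv = (phi rot ^^ 5) d; nxt = phi rot d in
           if face_of rot (snd d, fst d) = g \<and> white_face cs g then
             (if in_C cs prv \<and> in_C cs d \<and> in_C cs nxt then 1/2 else 0) +
             (if in_C cs d \<and> \<not> in_C cs prv \<and> \<not> in_C cs nxt then 1 else 0)
           else 0)
      else 0)"

definition final_charge ::
  "('a \<times> 'a) set \<Rightarrow> ('a \<Rightarrow> 'a \<Rightarrow> 'a) \<Rightarrow> 'a list \<Rightarrow> ('a \<times> 'a) set \<Rightarrow> real" where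
  "final_charge E rot cs g =
     real (white_count cs g) + (\<Sum>h\<in>faces E rot. recv rot cs g h)
       - (\<Sum>h\<in>faces E rot. recv rot cs h g)"

end

theory Submission
  imports Defs
begin

text \<open>Since C runs along v4 v5 v6 v1, the two white vertices of f are v2 and v3, so f starts with
  charge 2 and, not being black, receives nothing. Across v4 v5 and v6 v1 the rules pay nothing,
  because the neighbouring face sees exactly one of its two adjacent edges on C, and the edges at
  v2, v3 are not on C. Across v5 v6 Rule B pays one unit, because v5 and v6 already use their two
  C-edges on f. What has to be shown is that the face h across v5 v6 is a black hexagon.
  Rerouting C through v4 v3 v2 v1 gives a second longest cycle D avoiding v5 and v6; if h were
  a pentagon or had a white vertex, the boundary of h would provide a detour lengthening C or D.\<close>

section \<open>Cycles as vertex lists\<close>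

definition path_edges :: "'a list \<Rightarrow> ('a \<times> 'a) set" where
  "path_edges xs = set (zip xs (tl xs))"

definition cycle_edges :: "'a list \<Rightarrow> ('a \<times> 'a) set" where
  "cycle_edges xs = path_edges xs \<union> {(last xs, hd xs)}"

lemma path_edges_nth: "path_edges xs = {(xs!i, xs!(Suc i)) | i. Suc i < length xs}"
  unfolding path_edges_def set_zip by (auto simp: nth_tl)

lemma path_edges_Nil [simp]: "path_edges [] = {}"
  unfolding path_edges_def by simp

lemma path_edges_singleton [simp]: "path_edges [a] = {}"
  unfolding path_edges_def by simp

lemma path_edges_Cons: "xs \<noteq> [] \<Longrightarrow> path_edges (a # xs) = insert (a, hd xs) (path_edges xs)"
  unfolding path_edges_def by (cases xs) auto

lemma path_edges_append: "path_edges (xs @ y # ys) = path_edges (xs @ [y]) \<union> path_edges (y # ys)"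
proof (induction xs)
  case (Cons a xs)
  then show ?case by (cases xs) (auto simp: path_edges_Cons)
qed simp

lemma path_edges_snoc: "xs \<noteq> [] \<Longrightarrow> path_edges (xs @ [a]) = insert (last xs, a) (path_edges xs)"
  by (induction xs) (auto simp: path_edges_Cons neq_Nil_conv)

lemma path_edges_rev: "path_edges (rev xs) = converse (path_edges xs)"
proof (induction xs)
  case (Cons a xs)
  then show ?case by (cases "xs = []") (auto simp: path_edges_snoc path_edges_Cons last_rev)
qed simp

lemma path_edges_split: "(a, b) \<in> path_edges xs \<Longrightarrow> \<exists>us vs. xs = us @ a # b # vs"
proof (induction xs)
  case (Cons x xs)
  show ?case
  proof (cases "(a, b) \<in> path_edges xs")
    case True
    then obtain us vs where "xs = us @ a # b # vs" using Cons.IH by blast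
    then show ?thesis by (intro exI[of _ "x # us"] exI[of _ vs]) auto
  next
    case False
    then have "xs \<noteq> []" "a = x" "b = hd xs" using Cons.prems by (cases xs; auto simp: path_edges_Cons)+
    then show ?thesis by (intro exI[of _ "[]"] exI[of _ "tl xs"]) auto
  qed
qed simp

lemma cycle_edges_nth:
  assumes "xs \<noteq> []"
  shows "cycle_edges xs = {(xs!i, xs!((i + 1) mod length xs)) | i. i < length xs}"
proof (intro set_eqI iffI)
  fix e assume "e \<in> cycle_edges xs"
  then consider "e \<in> path_edges xs" | "e = (last xs, hd xs)" unfolding cycle_edges_def by auto
  then show "e \<in> {(xs!i, xs!((i + 1) mod length xs)) | i. i < length xs}"
  proof cases
    case 1
    then obtain i where "Suc i < length xs" "e = (xs!i, xs!Suc i)" by (auto simp: path_edges_nth)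
    then show ?thesis by (intro CollectI exI[of _ i]) auto
  next
    case 2
    then show ?thesis using assms
      by (intro CollectI exI[of _ "length xs - 1"]) (auto simp: last_conv_nth hd_conv_nth)
  qed
next
  fix e assume "e \<in> {(xs!i, xs!((i + 1) mod length xs)) | i. i < length xs}"
  then obtain i where i: "i < length xs" "e = (xs!i, xs!((i + 1) mod length xs))" by auto
  show "e \<in> cycle_edges xs"
  proof (cases "Suc i < length xs")
    case True
    then show ?thesis using i unfolding cycle_edges_def path_edges_nth by auto
  next
    case False
    then have "i = length xs - 1" using i by auto
    then show ?thesis using i assms unfolding cycle_edges_def by (auto simp: last_conv_nth hd_conv_nth)
  qed
qed

lemma cycle_edges_rotate1:
  assumes "xs \<noteq> []" shows "cycle_edges (rotate1 xs) = cycle_edges xs"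
proof -
  obtain a r where xs: "xs = a # r" using assms by (cases xs) auto
  show ?thesis
  proof (cases "r = []")
    case False
    then show ?thesis
      using xs by (auto simp: cycle_edges_def path_edges_snoc path_edges_Cons)
  qed (use xs in simp)
qed

lemma cycle_edges_rotate: "xs \<noteq> [] \<Longrightarrow> cycle_edges (rotate k xs) = cycle_edges xs"
  by (induction k) (auto simp: cycle_edges_rotate1)

lemma cycle_edges_rev: "xs \<noteq> [] \<Longrightarrow> cycle_edges (rev xs) = converse (cycle_edges xs)"
  unfolding cycle_edges_def by (auto simp: path_edges_rev hd_rev last_rev)

lemma is_cycle_iff_cycle_edges:
  "is_cycle V E cs \<longleftrightarrow> 3 \<le> length cs \<and> distinct cs \<and> set cs \<subseteq> V \<and> cycle_edges cs \<subseteq> E"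
proof -
  have "cs \<noteq> []" if "3 \<le> length cs" using that by auto
  then show ?thesis unfolding is_cycle_def by (auto simp: cycle_edges_nth) blast
qed

lemma is_cycle_nonempty: "is_cycle V E cs \<Longrightarrow> cs \<noteq> []"
  unfolding is_cycle_def by auto

lemma in_C_iff_cycle_edges:
  "cs \<noteq> [] \<Longrightarrow> in_C cs (a, b) \<longleftrightarrow> (a, b) \<in> cycle_edges cs \<or> (b, a) \<in> cycle_edges cs"
  unfolding in_C_def by (auto simp: cycle_edges_nth)

lemma in_C_commute: "in_C cs (a, b) \<longleftrightarrow> in_C cs (b, a)"
  unfolding in_C_def by auto

lemma in_C_imp_mem: "in_C cs (a, b) \<Longrightarrow> a \<in> set cs \<and> b \<in> set cs"
  unfolding in_C_def by (metis fst_conv snd_conv nth_mem mod_less_divisor gr_implies_not0 neq0_conv)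

lemma in_C_imp_edge: "is_cycle V E cs \<Longrightarrow> sym E \<Longrightarrow> in_C cs (a, b) \<Longrightarrow> (a, b) \<in> E"
  unfolding in_C_def is_cycle_def by (auto dest: symD)

lemma in_C_nth_iff:
  assumes cyc: "is_cycle V E cs" and i: "i < length cs"
  shows "in_C cs (cs!i, w) \<longleftrightarrow>
           w = cs!((i + 1) mod length cs) \<or> w = cs!((i + length cs - 1) mod length cs)"
proof -
  let ?n = "length cs"
  have d: "distinct cs" and n3: "3 \<le> ?n" using cyc unfolding is_cycle_def by auto
  have lt: "k mod ?n < ?n" for k using is_cycle_nonempty[OF cyc] by simp
  have eq: "cs!j = cs!i \<longleftrightarrow> j = i" if "j < ?n" for j
    using d that i by (simp add: nth_eq_iff_index_eq)
  have succ: "(j + 1) mod ?n = (if j + 1 < ?n then j + 1 else 0)" if "j < ?n" for j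
  proof (cases "j + 1 < ?n")
    case False
    then have "j + 1 = ?n" using that by simp
    then show ?thesis by simp
  qed simp
  have pred: "(i + ?n - 1) mod ?n = (if i = 0 then ?n - 1 else i - 1)"
    using i by (cases i) (auto simp: mod_if)
  have key: "(j + 1) mod ?n = i \<longleftrightarrow> j = (i + ?n - 1) mod ?n" if "j < ?n" for j
    using that i n3 unfolding succ[OF that] pred by auto
  show ?thesis
  proof
    assume "in_C cs (cs!i, w)"
    then obtain j where j: "j < ?n" and disj:
      "(cs!j = cs!i \<and> cs!((j + 1) mod ?n) = w) \<or> (cs!j = w \<and> cs!((j + 1) mod ?n) = cs!i)"
      unfolding in_C_def by auto
    then consider "j = i" "cs!((j + 1) mod ?n) = w" | "cs!j = w" "(j + 1) mod ?n = i"
      using eq[OF j] eq[OF lt] by auto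
    then show "w = cs!((i + 1) mod ?n) \<or> w = cs!((i + ?n - 1) mod ?n)"
      by cases (use key[OF j] in auto)
  next
    assume "w = cs!((i + 1) mod ?n) \<or> w = cs!((i + ?n - 1) mod ?n)"
    then show "in_C cs (cs!i, w)"
    proof
      assume w: "w = cs!((i + ?n - 1) mod ?n)"
      have "((i + ?n - 1) mod ?n + 1) mod ?n = i" using key[OF lt] by simp
      then show ?thesis unfolding in_C_def using w lt by (intro exI[of _ "(i + ?n - 1) mod ?n"]) auto
    qed (use i in \<open>auto simp: in_C_def\<close>)
  qed
qed

lemma in_C_two_neighbours:
  assumes cyc: "is_cycle V E cs" and u: "u \<in> set cs"
  shows "\<exists>w1 w2. w1 \<noteq> w2 \<and> in_C cs (u, w1) \<and> in_C cs (u, w2)"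
proof -
  let ?n = "length cs"
  obtain i where i: "i < ?n" "u = cs!i" using u by (auto simp: in_set_conv_nth)
  have d: "distinct cs" and n3: "3 \<le> ?n" using cyc unfolding is_cycle_def by auto
  have "(i + 1) mod ?n \<noteq> (i + ?n - 1) mod ?n"
    using i n3 by (cases i) (auto simp: mod_if)
  moreover have "(i + 1) mod ?n < ?n" "(i + ?n - 1) mod ?n < ?n" using is_cycle_nonempty[OF cyc] by simp_all
  ultimately have "cs!((i + 1) mod ?n) \<noteq> cs!((i + ?n - 1) mod ?n)"
    using d by (simp add: nth_eq_iff_index_eq)
  then show ?thesis using in_C_nth_iff[OF cyc i(1)] i by blast
qed

lemma in_C_at_most_two_neighbours:
  assumes cyc: "is_cycle V E cs"
    and "in_C cs (u, a)" "in_C cs (u, b)" "in_C cs (u, c)"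
  shows "a = b \<or> a = c \<or> b = c"
proof -
  have "u \<in> set cs" using assms(2) in_C_imp_mem by fast
  then obtain i where i: "i < length cs" "u = cs!i" by (auto simp: in_set_conv_nth)
  show ?thesis using assms(2-) unfolding i(2) in_C_nth_iff[OF cyc i(1)] by auto
qed

definition same_cycle :: "'a set \<Rightarrow> ('a \<times> 'a) set \<Rightarrow> 'a list \<Rightarrow> 'a list \<Rightarrow> bool" where
  "same_cycle V E cs cs' \<longleftrightarrow> is_cycle V E cs' \<and> length cs' = length cs \<and> set cs' = set cs \<and>
     (\<forall>x y. in_C cs' (x, y) = in_C cs (x, y))"

lemma same_cycle_trans: "same_cycle V E a b \<Longrightarrow> same_cycle V E b c \<Longrightarrow> same_cycle V E a c"
  unfolding same_cycle_def by auto

lemma same_cycle_rotate: "is_cycle V E cs \<Longrightarrow> same_cycle V E cs (rotate k cs)"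
  using is_cycle_nonempty[of V E cs]
  by (simp add: same_cycle_def is_cycle_iff_cycle_edges in_C_iff_cycle_edges cycle_edges_rotate)

lemma same_cycle_rev:
  assumes sym: "sym E" and cyc: "is_cycle V E cs"
  shows "same_cycle V E cs (rev cs)"
proof -
  have ne: "cs \<noteq> []" using is_cycle_nonempty[OF cyc] .
  have "is_cycle V E (rev cs)"
    using cyc ne sym unfolding is_cycle_iff_cycle_edges by (auto simp: cycle_edges_rev dest: symD)
  moreover have "in_C (rev cs) (x, y) = in_C cs (x, y)" for x y
    using ne by (auto simp: in_C_iff_cycle_edges cycle_edges_rev)
  ultimately show ?thesis unfolding same_cycle_def by simp
qed

lemma longest_cycle_same_cycle:
  "longest_cycle V E cs \<Longrightarrow> same_cycle V E cs cs' \<Longrightarrow> longest_cycle V E cs'"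
  unfolding longest_cycle_def same_cycle_def by auto

lemma same_cycle_starting_with_cycle_edge:
  assumes cyc: "is_cycle V E cs" and e: "(a, b) \<in> cycle_edges cs"
  shows "\<exists>r. same_cycle V E cs (a # b # r)"
proof -
  from e consider "(a, b) \<in> path_edges cs" | "a = last cs" "b = hd cs"
    unfolding cycle_edges_def by auto
  then show ?thesis
  proof cases
    case 1
    then obtain us vs where cs: "cs = us @ a # b # vs" using path_edges_split[OF 1] by blast
    have "rotate (length us) cs = a # b # vs @ us" unfolding cs by (simp add: rotate_append)
    then show ?thesis using same_cycle_rotate[OF cyc, of "length us"] by (intro exI[of _ "vs @ us"]) simp
  next
    case 2
    have n3: "3 \<le> length cs" using cyc unfolding is_cycle_def by auto
    define m where "m = butlast cs"
    have cs: "cs = m @ [a]" unfolding m_def 2(1) using is_cycle_nonempty[OF cyc] by simp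
    have "m \<noteq> []" using cs n3 by auto
    then have m: "m = b # tl m" using cs 2(2) by simp
    have "rotate (length m) cs = [a] @ m" unfolding cs by (rule rotate_append)
    then have "rotate (length m) cs = a # b # tl m" using m by simp
    then show ?thesis using same_cycle_rotate[OF cyc, of "length m"] by (intro exI[of _ "tl m"]) simp
  qed
qed

lemma same_cycle_starting_with:
  assumes cyc: "is_cycle V E cs" and sym: "sym E" and e: "in_C cs (a, b)"
  shows "\<exists>r. same_cycle V E cs (a # b # r)"
proof -
  have ne: "cs \<noteq> []" using is_cycle_nonempty[OF cyc] .
  from e consider "(a, b) \<in> cycle_edges cs" | "(a, b) \<in> cycle_edges (rev cs)"
    using in_C_iff_cycle_edges[OF ne] cycle_edges_rev[OF ne] by auto
  then show ?thesis
  proof cases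
    case 1
    then show ?thesis using same_cycle_starting_with_cycle_edge[OF cyc] by blast
  next
    case 2
    have rev: "same_cycle V E cs (rev cs)" using same_cycle_rev[OF sym cyc] .
    then have "is_cycle V E (rev cs)" unfolding same_cycle_def by blast
    then obtain r where "same_cycle V E (rev cs) (a # b # r)"
      using same_cycle_starting_with_cycle_edge[OF _ 2] by blast
    then show ?thesis using same_cycle_trans[OF rev] by blast
  qed
qed

lemma is_cycle_replace_segment:
  assumes cyc: "is_cycle V E (p # old @ q # rest)"
    and mid: "distinct mid" "set mid \<subseteq> V" "set mid \<inter> set (p # q # rest) = {}"
    and path: "path_edges (p # mid @ [q]) \<subseteq> E"
    and len: "length old \<le> length mid"
  shows "is_cycle V E (p # mid @ q # rest)"
proof -
  have c: "3 \<le> length (p # old @ q # rest)" "distinct (p # old @ q # rest)"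
     "set (p # old @ q # rest) \<subseteq> V" "cycle_edges (p # old @ q # rest) \<subseteq> E"
    using cyc unfolding is_cycle_iff_cycle_edges by auto
  have "path_edges ((p # old) @ q # rest) = path_edges ((p # old) @ [q]) \<union> path_edges (q # rest)"
    "path_edges ((p # mid) @ q # rest) = path_edges ((p # mid) @ [q]) \<union> path_edges (q # rest)"
    by (rule path_edges_append)+
  then have "cycle_edges (p # mid @ q # rest) \<subseteq> E"
    using c(4) path unfolding cycle_edges_def by auto
  then show ?thesis using c len mid unfolding is_cycle_iff_cycle_edges by auto
qed

lemma longest_cycle_no_longer_segment:
  assumes lc: "longest_cycle V E (p # old @ q # rest)"
    and mid: "distinct mid" "set mid \<subseteq> V" "set mid \<inter> set (p # q # rest) = {}"
    and path: "path_edges (p # mid @ [q]) \<subseteq> E"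
    and len: "length old < length mid"
  shows False
proof -
  have "is_cycle V E (p # mid @ q # rest)"
    using is_cycle_replace_segment[OF _ mid path] lc len unfolding longest_cycle_def by auto
  then have "length (p # mid @ q # rest) \<le> length (p # old @ q # rest)"
    using lc unfolding longest_cycle_def by blast
  then show False using len by simp
qed

lemma longest_cycle_no_detour:
  assumes lc: "longest_cycle V E cs" and sym: "sym E" and e: "in_C cs (p, q)"
    and mid: "mid \<noteq> []" "distinct mid" "set mid \<subseteq> V" "set mid \<inter> set cs = {}"
    and path: "path_edges (p # mid @ [q]) \<subseteq> E"
  shows False
proof -
  have cyc: "is_cycle V E cs" using lc unfolding longest_cycle_def by auto
  obtain r where s: "same_cycle V E cs (p # q # r)" using same_cycle_starting_with[OF cyc sym e] by blast
  have "longest_cycle V E (p # [] @ q # r)" using longest_cycle_same_cycle[OF lc s] by simp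
  then show False
    by (rule longest_cycle_no_longer_segment[OF _ mid(2,3) _ path])
       (use mid(1,4) s in \<open>auto simp: same_cycle_def\<close>)
qed

lemma is_cycle_next_vertex:
  assumes cyc: "is_cycle V E (a # b # r)" and e: "in_C (a # b # r) (b, c)" and ca: "c \<noteq> a"
  shows "\<exists>r'. r = c # r'"
proof -
  let ?xs = "a # b # r"
  have n3: "3 \<le> length ?xs" using cyc unfolding is_cycle_def by auto
  have "(1 + 1) mod length ?xs = 2" using n3 unfolding one_add_one by (intro mod_less) auto
  moreover have "(1 + length ?xs - 1) mod length ?xs = 0" by simp
  ultimately have "c = ?xs ! 2" using in_C_nth_iff[OF cyc, of 1 c] e ca n3 by auto
  then show ?thesis using n3 by (cases r) auto
qed

lemma longest_cycle_no_detour_around: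
  assumes lc: "longest_cycle V E cs" and sym: "sym E"
    and e: "in_C cs (p, t)" "in_C cs (t, q)" and pq: "p \<noteq> q"
    and mid: "2 \<le> length mid" "distinct mid" "set mid \<subseteq> V" "set mid \<inter> set cs \<subseteq> {t}"
    and path: "path_edges (p # mid @ [q]) \<subseteq> E"
  shows False
proof -
  have cyc: "is_cycle V E cs" using lc unfolding longest_cycle_def by auto
  obtain r where s: "same_cycle V E cs (p # t # r)" using same_cycle_starting_with[OF cyc sym e(1)] by blast
  have cyc': "is_cycle V E (p # t # r)" using s unfolding same_cycle_def by auto
  obtain r' where r: "r = q # r'"
    using is_cycle_next_vertex[OF cyc' _ pq[symmetric]] s e(2) unfolding same_cycle_def by blast
  have lc': "longest_cycle V E (p # [t] @ q # r')" using longest_cycle_same_cycle[OF lc s] r by simp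
  have "t \<notin> set (p # q # r')" using cyc' r unfolding is_cycle_def by auto
  then have "set mid \<inter> set (p # q # r') = {}" using mid(4) s r unfolding same_cycle_def by auto
  then show False using longest_cycle_no_longer_segment[OF lc' mid(2,3) _ path] mid(1) by simp
qed

section \<open>Faces of cubic maps\<close>

definition face_walk :: "('a \<Rightarrow> 'a \<Rightarrow> 'a) \<Rightarrow> 'a \<times> 'a \<Rightarrow> nat \<Rightarrow> 'a" where
  "face_walk rot d k = fst ((phi rot ^^ k) d)"

definition face_period :: "('a \<Rightarrow> 'a \<Rightarrow> 'a) \<Rightarrow> 'a \<times> 'a \<Rightarrow> nat" where
  "face_period rot d = (LEAST p. 0 < p \<and> (phi rot ^^ p) d = d)"

lemma phi_pow_eq_face_walk: "(phi rot ^^ k) d = (face_walk rot d k, face_walk rot d (Suc k))"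
  unfolding face_walk_def by (simp add: phi_def)

lemma face_walk_Suc_Suc:
  "face_walk rot d (Suc (Suc k)) = rot (face_walk rot d (Suc k)) (face_walk rot d k)"
  using phi_pow_eq_face_walk[of "Suc k" rot d] phi_pow_eq_face_walk[of k rot d] by (simp add: phi_def)

lemma phi_pow_add: "(phi rot ^^ (i + j)) d = (phi rot ^^ i) ((phi rot ^^ j) d)"
  by (simp add: funpow_add)

lemma self_in_face_of: "d \<in> face_of rot d"
  unfolding face_of_def by (metis (mono_tags) CollectI funpow_0)

lemma face_of_subset:
  assumes "e = (phi rot ^^ k) d" shows "face_of rot e \<subseteq> face_of rot d"
proof
  fix x assume "x \<in> face_of rot e"
  then obtain j where "x = (phi rot ^^ j) e" unfolding face_of_def by auto
  then have "x = (phi rot ^^ (j + k)) d" using assms by (simp add: funpow_add)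
  then show "x \<in> face_of rot d" unfolding face_of_def by blast
qed

locale cubic_map =
  fixes V :: "'a set" and E :: "('a \<times> 'a) set" and rot :: "'a \<Rightarrow> 'a \<Rightarrow> 'a"
  assumes simple: "simple_graph V E"
    and rotation: "rotation_system V E rot"
    and cubic: "cubic V E"
begin

lemma edge_sym: "(a, b) \<in> E \<Longrightarrow> (b, a) \<in> E"
  using simple unfolding simple_graph_def by (auto dest: symD)

lemma sym_E: "sym E"
  using simple unfolding simple_graph_def by auto

lemma edge_in_V: "(a, b) \<in> E \<Longrightarrow> a \<in> V \<and> b \<in> V"
  using simple unfolding simple_graph_def by auto

lemma no_loop: "(a, a) \<notin> E"
  using simple unfolding simple_graph_def by auto

lemma finite_E: "finite E"
  using simple finite_subset unfolding simple_graph_def by (metis finite_SigmaI)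

lemma card_nbrs: "v \<in> V \<Longrightarrow> card (nbrs E v) = 3"
  using cubic unfolding cubic_def by auto

lemma finite_nbrs: "v \<in> V \<Longrightarrow> finite (nbrs E v)"
  using card_nbrs card.infinite by fastforce

lemma mem_nbrs_iff: "b \<in> nbrs E a \<longleftrightarrow> (a, b) \<in> E"
  unfolding nbrs_def by simp

lemma rot_bij: "v \<in> V \<Longrightarrow> bij_betw (rot v) (nbrs E v) (nbrs E v)"
  using rotation unfolding rotation_system_def by auto

lemma rot_transitive: "v \<in> V \<Longrightarrow> u \<in> nbrs E v \<Longrightarrow> w \<in> nbrs E v \<Longrightarrow> \<exists>k. (rot v ^^ k) u = w"
  using rotation unfolding rotation_system_def by auto

lemma rot_in_nbrs: "v \<in> V \<Longrightarrow> a \<in> nbrs E v \<Longrightarrow> rot v a \<in> nbrs E v"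
  using rot_bij bij_betwE by blast

lemma rot_inj: "v \<in> V \<Longrightarrow> a \<in> nbrs E v \<Longrightarrow> b \<in> nbrs E v \<Longrightarrow> rot v a = rot v b \<Longrightarrow> a = b"
  using rot_bij bij_betw_imp_inj_on inj_onD by metis

lemma rot_neq:
  assumes v: "v \<in> V" and a: "a \<in> nbrs E v" shows "rot v a \<noteq> a"
proof
  assume fx: "rot v a = a"
  have "(rot v ^^ k) a = a" for k by (induction k) (auto simp: fx)
  then have "nbrs E v \<subseteq> {a}" using rot_transitive[OF v a] by auto
  then have "card (nbrs E v) \<le> 1" using card_mono[of "{a}"] by fastforce
  then show False using card_nbrs[OF v] by simp
qed

lemma rot_rot_neq:
  assumes v: "v \<in> V" and a: "a \<in> nbrs E v" shows "rot v (rot v a) \<noteq> a"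
proof
  assume fx: "rot v (rot v a) = a"
  have "(rot v ^^ k) a \<in> {a, rot v a}" for k by (induction k) (auto simp: fx)
  then have "nbrs E v \<subseteq> {a, rot v a}" using rot_transitive[OF v a] by blast
  then have "card (nbrs E v) \<le> card {a, rot v a}" by (intro card_mono) auto
  also have "\<dots> \<le> 2" by (rule card_insert_le_m1) auto
  finally show False using card_nbrs[OF v] by simp
qed

lemma cycle_vertex_in_C:
  assumes cyc: "is_cycle V E Z" and u: "u \<in> set Z"
    and a: "(u, a) \<in> E" "a \<notin> set Z" and b: "(u, b) \<in> E" "b \<noteq> a"
  shows "in_C Z (u, b)"
proof -
  have uV: "u \<in> V" using edge_in_V[OF a(1)] by simp
  obtain w1 w2 where w: "w1 \<noteq> w2" "in_C Z (u, w1)" "in_C Z (u, w2)"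
    using in_C_two_neighbours[OF cyc u] by blast
  have "w1 \<in> nbrs E u" "w2 \<in> nbrs E u"
    using w in_C_imp_edge[OF cyc sym_E] unfolding mem_nbrs_iff by auto
  then have sub: "{a, w1, w2} \<subseteq> nbrs E u" using a by (auto simp: mem_nbrs_iff)
  have "w1 \<in> set Z" "w2 \<in> set Z" using w in_C_imp_mem by fast+
  then have "card {a, w1, w2} = card (nbrs E u)"
    using a(2) w(1) card_nbrs[OF uV] by (auto simp: card_insert_if)
  then have "nbrs E u = {a, w1, w2}" using card_subset_eq[OF finite_nbrs[OF uV] sub] by blast
  moreover have "b \<in> nbrs E u" using b(1) by (simp add: mem_nbrs_iff)
  ultimately have "b = w1 \<or> b = w2" using b(2) by blast
  then show ?thesis using w by blast
qed

lemma phi_in_E: "d \<in> E \<Longrightarrow> phi rot d \<in> E"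
proof -
  assume d: "d \<in> E"
  obtain u v where uv: "d = (u, v)" by (cases d)
  have v: "v \<in> V" using edge_in_V[of u v] d uv by simp
  have "u \<in> nbrs E v" unfolding mem_nbrs_iff using edge_sym[of u v] d uv by simp
  then have "rot v u \<in> nbrs E v" using rot_in_nbrs[OF v] by auto
  then show ?thesis unfolding phi_def uv mem_nbrs_iff by simp
qed

lemma inj_on_phi: "inj_on (phi rot) E"
proof (rule inj_onI)
  fix d e assume d: "d \<in> E" and e: "e \<in> E" and eq: "phi rot d = phi rot e"
  obtain u v where uv: "d = (u, v)" by (cases d)
  obtain u' v' where uv': "e = (u', v')" by (cases e)
  have vv: "v = v'" using eq uv uv' unfolding phi_def by simp
  have v: "v \<in> V" using edge_in_V[of u v] d uv by simp
  have "u \<in> nbrs E v" "u' \<in> nbrs E v"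
    unfolding mem_nbrs_iff using edge_sym[of u v] edge_sym[of u' v'] d e uv uv' vv by simp_all
  moreover have "rot v u = rot v u'" using eq uv uv' vv unfolding phi_def by simp
  ultimately show "d = e" using rot_inj[OF v] uv uv' vv by auto
qed

lemma phi_pow_in_E: "d \<in> E \<Longrightarrow> (phi rot ^^ k) d \<in> E"
  by (induction k) (auto simp: phi_in_E)

lemma phi_pow_cancel:
  assumes d: "d \<in> E" and eq: "(phi rot ^^ i) d = (phi rot ^^ (i + k)) d"
  shows "(phi rot ^^ k) d = d"
  using eq
proof (induction i)
  case (Suc i)
  have "phi rot ((phi rot ^^ i) d) = phi rot ((phi rot ^^ (i + k)) d)" using Suc.prems by simp
  then have "(phi rot ^^ i) d = (phi rot ^^ (i + k)) d"
    using inj_on_phi phi_pow_in_E[OF d] by (meson inj_onD)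
  then show ?case using Suc.IH by simp
qed simp

lemma face_of_subset_E:
  assumes d: "d \<in> E" shows "face_of rot d \<subseteq> E"
proof
  fix e assume "e \<in> face_of rot d"
  then obtain k where "e = (phi rot ^^ k) d" unfolding face_of_def by auto
  then show "e \<in> E" using phi_pow_in_E[OF d] by simp
qed

lemma finite_face_of: "d \<in> E \<Longrightarrow> finite (face_of rot d)"
  by (rule finite_subset[OF face_of_subset_E finite_E])

lemma phi_pow_eq_imp_periodic:
  assumes d: "d \<in> E" and ij: "i < j" and eq: "(phi rot ^^ i) d = (phi rot ^^ j) d"
  shows "(phi rot ^^ (j - i)) d = d"
  using phi_pow_cancel[OF d, of i "j - i"] eq ij by simp

text \<open>Pigeonhole on the finite face: the face-tracing permutation returns to d.\<close>
lemma face_period_exists: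
  assumes d: "d \<in> E" shows "\<exists>p>0. (phi rot ^^ p) d = d"
proof -
  let ?F = "face_of rot d" and ?g = "\<lambda>k. (phi rot ^^ k) d"
  have sub: "?g ` {..card ?F} \<subseteq> ?F" unfolding face_of_def by blast
  have "\<not> inj_on ?g {..card ?F}"
    using card_inj_on_le[OF _ sub finite_face_of[OF d]] by fastforce
  then obtain i j where "i < j" "?g i = ?g j" unfolding inj_on_def by (metis linorder_neqE_nat)
  then show ?thesis using phi_pow_eq_imp_periodic[OF d] by (metis zero_less_diff)
qed

lemma face_period:
  assumes d: "d \<in> E" shows "0 < face_period rot d" "(phi rot ^^ face_period rot d) d = d"
  using LeastI_ex[OF face_period_exists[OF d]] unfolding face_period_def by auto

lemma phi_pow_mod_face_period:
  assumes d: "d \<in> E" shows "(phi rot ^^ k) d = (phi rot ^^ (k mod face_period rot d)) d"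
proof -
  have "(phi rot ^^ (m * face_period rot d)) d = d" for m
    by (induction m) (auto simp: phi_pow_add face_period(2)[OF d])
  moreover have "k = k mod face_period rot d + (k div face_period rot d) * face_period rot d"
    using div_mult_mod_eq[of k "face_period rot d"] by linarith
  ultimately show ?thesis by (metis phi_pow_add)
qed

lemma phi_pow_inj_below_face_period:
  assumes d: "d \<in> E" and ij: "i < face_period rot d" "j < face_period rot d"
    and eq: "(phi rot ^^ i) d = (phi rot ^^ j) d"
  shows "i = j"
proof (rule ccontr)
  have least: "\<not> (phi rot ^^ k) d = d" if "0 < k" "k < face_period rot d" for k
    using not_less_Least[of k "\<lambda>p. 0 < p \<and> (phi rot ^^ p) d = d"] that
    unfolding face_period_def by blast
  assume "i \<noteq> j"
  then consider "i < j" | "j < i" by linarith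
  then show False
  proof cases
    case 1
    then show False using phi_pow_eq_imp_periodic[OF d 1 eq] least[of "j - i"] ij by simp
  next
    case 2
    then show False using phi_pow_eq_imp_periodic[OF d 2 eq[symmetric]] least[of "i - j"] ij by simp
  qed
qed

lemma face_of_eq_image: "d \<in> E \<Longrightarrow> face_of rot d = (\<lambda>k. (phi rot ^^ k) d) ` {..<face_period rot d}"
  unfolding face_of_def using phi_pow_mod_face_period face_period(1) by fastforce

lemma card_face_of: "d \<in> E \<Longrightarrow> card (face_of rot d) = face_period rot d"
  unfolding face_of_eq_image
  by (subst card_image) (auto intro: inj_onI dest: phi_pow_inj_below_face_period)

lemma face_of_eq_if_mem:
  assumes d: "d \<in> E" and e: "e \<in> face_of rot d" shows "face_of rot e = face_of rot d"
proof
  show "face_of rot e \<subseteq> face_of rot d"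
    using e face_of_subset unfolding face_of_def by blast
  obtain k where k: "e = (phi rot ^^ k) d" using e unfolding face_of_def by auto
  let ?p = "face_period rot d"
  have "(phi rot ^^ (?p * Suc k - k)) e = (phi rot ^^ (?p * Suc k)) d"
  proof -
    have "k \<le> ?p * Suc k" using face_period(1)[OF d] by (cases ?p) auto
    then show ?thesis unfolding k phi_pow_add[symmetric] by simp
  qed
  also have "\<dots> = d" using phi_pow_mod_face_period[OF d, of "?p * Suc k"] by simp
  finally show "face_of rot d \<subseteq> face_of rot e" using face_of_subset by metis
qed

lemma face_walk_edge: "d \<in> E \<Longrightarrow> (face_walk rot d k, face_walk rot d (Suc k)) \<in> E"
  using phi_pow_in_E phi_pow_eq_face_walk by metis

lemma face_walk_periodic: "d \<in> E \<Longrightarrow> face_walk rot d (k + face_period rot d) = face_walk rot d k"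
  unfolding face_walk_def using phi_pow_mod_face_period by (metis mod_add_self2)

lemma face_walk_neq_Suc: "d \<in> E \<Longrightarrow> face_walk rot d k \<noteq> face_walk rot d (Suc k)"
  using face_walk_edge no_loop by metis

lemma face_walk_neq_Suc_Suc:
  assumes d: "d \<in> E" shows "face_walk rot d k \<noteq> face_walk rot d (Suc (Suc k))"
proof -
  have e: "(face_walk rot d k, face_walk rot d (Suc k)) \<in> E" using face_walk_edge[OF d] .
  then have "face_walk rot d (Suc k) \<in> V" "face_walk rot d k \<in> nbrs E (face_walk rot d (Suc k))"
    using edge_in_V edge_sym mem_nbrs_iff by blast+
  then show ?thesis unfolding face_walk_Suc_Suc using rot_neq by metis
qed

text \<open>If a hexagonal face visited a vertex twice at distance three, that vertex would have the
  four distinct neighbours w (k+1), w (k+2), w (k+4), w (k+5), unless the face walk repeats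
  itself after three steps.\<close>
lemma hexagon_walk_neq_opposite:
  assumes d: "d \<in> E" and p6: "face_period rot d = 6"
  shows "face_walk rot d k \<noteq> face_walk rot d (k + 3)"
proof
  let ?w = "face_walk rot d"
  assume eq: "?w k = ?w (k + 3)"
  define a b1 b2 c1 c5 where "a = ?w k" and "b1 = ?w (k + 1)" and "b2 = ?w (k + 2)"
    and "c1 = ?w (k + 4)" and "c5 = ?w (k + 5)"
  note defs = a_def b1_def b2_def c1_def c5_def
  have w6: "?w (k + 6) = a" using face_walk_periodic[OF d, of k] p6 a_def by simp
  have w7: "?w (k + 7) = b1" using face_walk_periodic[OF d, of "k + 1"] p6 b1_def by (simp add: add.commute)
  have av: "a \<in> V" using edge_in_V[OF face_walk_edge[OF d, of k]] a_def by simp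
  have r1: "rot a c5 = b1" using face_walk_Suc_Suc[of rot d "k + 5"] w6 w7 c5_def by (simp add: numeral_eq_Suc)
  have r2: "rot a b2 = c1" using face_walk_Suc_Suc[of rot d "k + 2"] eq defs by (simp add: numeral_eq_Suc)
  have "(a, b1) \<in> E" "(a, c5) \<in> E" "(a, b2) \<in> E" "(a, c1) \<in> E"
    using face_walk_edge[OF d, of k] face_walk_edge[OF d, of "k + 3"] w6 eq defs
      edge_sym[OF face_walk_edge[OF d, of "k + 5"]] edge_sym[OF face_walk_edge[OF d, of "k + 2"]]
    by (simp_all add: numeral_eq_Suc)
  then have sub: "{b1, b2, c1, c5} \<subseteq> nbrs E a" by (auto simp: mem_nbrs_iff)
  have "b1 \<noteq> b2" "c1 \<noteq> c5" "c5 \<noteq> b1" "b2 \<noteq> c1"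
    using face_walk_neq_Suc[OF d, of "k + 1"] face_walk_neq_Suc[OF d, of "k + 4"]
      face_walk_neq_Suc_Suc[OF d, of "k + 5"] face_walk_neq_Suc_Suc[OF d, of "k + 2"] w7 defs
    by (simp_all add: numeral_eq_Suc)
  moreover have "b1 = c1 \<or> b2 = c5"
  proof (rule ccontr)
    assume "\<not> (b1 = c1 \<or> b2 = c5)"
    then have "card {b1, b2, c1, c5} = 4" using calculation by auto
    then show False using card_mono[OF finite_nbrs[OF av] sub] card_nbrs[OF av] by simp
  qed
  ultimately have "b1 = c1" using r1 r2 by auto
  then have "(phi rot ^^ k) d = (phi rot ^^ (k + 3)) d"
    using phi_pow_eq_face_walk[of k rot d] phi_pow_eq_face_walk[of "k + 3" rot d] eq defs
    by (simp add: numeral_eq_Suc)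
  then have "(phi rot ^^ (k mod 6)) d = (phi rot ^^ ((k + 3) mod 6)) d"
    using phi_pow_mod_face_period[OF d] p6 by metis
  then have "k mod 6 = (k + 3) mod 6" using phi_pow_inj_below_face_period[OF d] p6 by simp
  then show False by presburger
qed

lemma face_walk_distinct:
  assumes d: "d \<in> E" and p: "face_period rot d \<in> {5, 6}"
    and ij: "i < face_period rot d" "j < face_period rot d" "i \<noteq> j"
  shows "face_walk rot d i \<noteq> face_walk rot d j"
proof -
  let ?w = "face_walk rot d" and ?p = "face_period rot d"
  have main: "?w i \<noteq> ?w j" if lt: "i < j" "j < ?p" for i j
  proof -
    have per: "?w (i + ?p) = ?w i" using face_walk_periodic[OF d] .
    have p56: "?p = 5 \<or> ?p = 6" using p by simp
    then consider "j = i + 1" | "j = i + 2" | "j = i + 3" | "j = i + 4" | "j = i + 5"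
      using lt by linarith
    then show ?thesis
    proof cases
      case 1 then show ?thesis using face_walk_neq_Suc[OF d, of i] by simp
    next
      case 2 then show ?thesis using face_walk_neq_Suc_Suc[OF d, of i] by (simp add: numeral_eq_Suc)
    next
      case 3
      show ?thesis
      proof (cases "?p = 6")
        case True then show ?thesis using hexagon_walk_neq_opposite[OF d True, of i] 3 by simp
      next
        case False
        then have "?w (Suc (Suc j)) = ?w i" using per p56 3 by (simp add: add.commute)
        then show ?thesis using face_walk_neq_Suc_Suc[OF d, of j] by metis
      qed
    next
      case 4
      show ?thesis
      proof (cases "?p = 6")
        case True
        then have "?w (Suc (Suc j)) = ?w i" using per 4 by (simp add: add.commute)
        then show ?thesis using face_walk_neq_Suc_Suc[OF d, of j] by metis
      next
        case False
        then have "?w (Suc j) = ?w i" using per p56 4 by (simp add: add.commute)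
        then show ?thesis using face_walk_neq_Suc[OF d, of j] by metis
      qed
    next
      case 5
      then have "?w (Suc j) = ?w i" using per p56 lt by (simp add: add.commute)
      then show ?thesis using face_walk_neq_Suc[OF d, of j] by metis
    qed
  qed
  show ?thesis using main[of i j] main[of j i] ij by (cases "i < j") auto
qed

lemma distinct_face_walk:
  assumes d: "d \<in> E" and p: "face_period rot d \<in> {5, 6}"
  shows "distinct (map (face_walk rot d) [0..<face_period rot d])"
  unfolding distinct_conv_nth using face_walk_distinct[OF d p] by simp

lemma path_edges_face_walk:
  assumes d: "d \<in> E" shows "path_edges (map (face_walk rot d) [i..<j]) \<subseteq> E"
  unfolding path_edges_nth using face_walk_edge[OF d] by auto

lemma prev_dart:
  assumes d: "d \<in> E" and p6: "(phi rot ^^ 6) d = d"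
  obtains p where "(phi rot ^^ 5) d = (p, fst d)" "rot (fst d) p = snd d" "(p, fst d) \<in> E"
proof -
  obtain p q where pq: "(phi rot ^^ 5) d = (p, q)" by (cases "(phi rot ^^ 5) d")
  have "phi rot ((phi rot ^^ 5) d) = d" using p6 by (simp add: numeral_eq_Suc)
  then have "(q, rot q p) = d" using pq unfolding phi_def by simp
  moreover have "(p, q) \<in> E" using phi_pow_in_E[OF d, of 5] pq by simp
  ultimately show ?thesis using that pq by auto
qed

end

lemma fullerene_cubic_map: "fullerene V E rot \<Longrightarrow> cubic_map V E rot"
  unfolding fullerene_def plane_graph_def cubic_map_def by auto

lemma fullerene_face_size: "fullerene V E rot \<Longrightarrow> d \<in> E \<Longrightarrow> card (face_of rot d) \<in> {5, 6}"
  unfolding fullerene_def faces_def by auto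

section \<open>The white hexagon\<close>

definition rules_charge :: "('a \<Rightarrow> 'a \<Rightarrow> 'a) \<Rightarrow> 'a list \<Rightarrow> 'a \<times> 'a \<Rightarrow> real" where
  "rules_charge rot cs d =
     (let prv = (phi rot ^^ 5) d; nxt = phi rot d in
        (if in_C cs prv \<and> in_C cs d \<and> in_C cs nxt then 1/2 else 0) +
        (if in_C cs d \<and> \<not> in_C cs prv \<and> \<not> in_C cs nxt then 1 else 0))"

lemma recv_black_hexagon:
  "black_face cs g \<Longrightarrow> card g = 6 \<Longrightarrow>
    recv rot cs g h = (\<Sum>d\<in>g. if face_of rot (snd d, fst d) = h \<and> white_face cs h
                               then rules_charge rot cs d else 0)"
  unfolding recv_def rules_charge_def Let_def by simp

lemma rules_charge_not_in_C: "\<not> in_C cs d \<Longrightarrow> rules_charge rot cs d = 0"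
  unfolding rules_charge_def by (simp add: Let_def)

text \<open>v1 ... v6 are the vertices of f in the order of its boundary walk (the equations rot_f);
  v2 and v3 turn out to be its two white vertices.\<close>
locale white_hexagon =
  fixes V :: "'a set" and E :: "('a \<times> 'a) set" and rot :: "'a \<Rightarrow> 'a \<Rightarrow> 'a"
    and cs :: "'a list" and v1 v2 v3 v4 v5 v6 :: 'a
  assumes fullerene: "fullerene V E rot"
    and longest: "longest_cycle V E cs"
    and f_dart: "(v1, v2) \<in> E"
    and f_hexagon: "card (face_of rot (v1, v2)) = 6"
    and f_white: "white_face cs (face_of rot (v1, v2))"
    and rot_f: "rot v2 v1 = v3" "rot v3 v2 = v4" "rot v4 v3 = v5"
      "rot v5 v4 = v6" "rot v6 v5 = v1" "rot v1 v6 = v2"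
    and on_C: "in_C cs (v4, v5)" "in_C cs (v5, v6)" "in_C cs (v6, v1)"
begin

sublocale cubic_map V E rot
  using fullerene by (rule fullerene_cubic_map)

abbreviation f :: "('a \<times> 'a) set" where
  "f \<equiv> face_of rot (v1, v2)"

lemma cs_cycle: "is_cycle V E cs"
  using longest unfolding longest_cycle_def by auto

lemma f_phi_pow:
  "(phi rot ^^ k) (v1, v2) = ([v1, v2, v3, v4, v5, v6] ! (k mod 6), [v1, v2, v3, v4, v5, v6] ! (Suc k mod 6))"
proof (induction k)
  case (Suc k)
  have "k mod 6 < 6" by simp
  then consider "k mod 6 = 0" | "k mod 6 = 1" | "k mod 6 = 2" | "k mod 6 = 3" | "k mod 6 = 4" | "k mod 6 = 5"
    by linarith
  then show ?case using Suc rot_f by cases (simp_all add: phi_def mod_Suc)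
qed simp

lemma f_face_period: "face_period rot (v1, v2) = 6"
  using card_face_of[OF f_dart] f_hexagon by simp

lemma f_distinct: "distinct [v1, v2, v3, v4, v5, v6]"
proof -
  let ?w = "face_walk rot (v1, v2)"
  have "map ?w [0..<6] = [?w 0, ?w 1, ?w 2, ?w 3, ?w 4, ?w 5]"
    by (simp add: upt_rec numeral_eq_Suc)
  also have "\<dots> = [v1, v2, v3, v4, v5, v6]"
    unfolding face_walk_def f_phi_pow by simp
  finally have "map ?w [0..<6] = [v1, v2, v3, v4, v5, v6]" .
  then show ?thesis using distinct_face_walk[OF f_dart] f_face_period by simp
qed

lemma f_darts: "f = {(v1, v2), (v2, v3), (v3, v4), (v4, v5), (v5, v6), (v6, v1)}"
proof -
  have "{..<6::nat} = {0, 1, 2, 3, 4, 5}" by auto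
  then show ?thesis unfolding face_of_eq_image[OF f_dart] f_face_period f_phi_pow by simp
qed

lemma f_edges: "(v1, v2) \<in> E" "(v2, v3) \<in> E" "(v3, v4) \<in> E" "(v4, v5) \<in> E" "(v5, v6) \<in> E" "(v6, v1) \<in> E"
  using face_of_subset_E[OF f_dart] unfolding f_darts by auto

lemma f_vertices_in_V: "v1 \<in> V" "v2 \<in> V" "v3 \<in> V" "v4 \<in> V" "v5 \<in> V" "v6 \<in> V"
  using f_edges edge_in_V by blast+

lemma f_black_vertices: "v1 \<in> set cs" "v4 \<in> set cs" "v5 \<in> set cs" "v6 \<in> set cs"
  using on_C in_C_imp_mem by fast+

lemma f_white_vertices: "v2 \<notin> set cs" "v3 \<notin> set cs"
proof -
  let ?W = "{v \<in> face_vertices f. v \<notin> set cs}"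
  have "face_vertices f = {v1, v2, v3, v4, v5, v6}"
    unfolding face_vertices_def f_darts by auto
  then have "?W \<subseteq> {v2, v3}" using f_black_vertices by auto
  moreover have "card ?W = card {v2, v3}"
    using f_white f_distinct unfolding white_face_def white_count_def by simp
  ultimately have "?W = {v2, v3}" using card_subset_eq[of "{v2, v3}"] by blast
  then show "v2 \<notin> set cs" "v3 \<notin> set cs" by auto
qed

lemma C_neighbours_v5:
  assumes "in_C cs (v5, w)" shows "w = v4 \<or> w = v6"
proof -
  have "in_C cs (v5, v4)" using on_C(1) in_C_commute by metis
  then show ?thesis using in_C_at_most_two_neighbours[OF cs_cycle _ on_C(2) assms] f_distinct by auto
qed

lemma C_neighbours_v6:
  assumes "in_C cs (v6, w)" shows "w = v5 \<or> w = v1"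
proof -
  have "in_C cs (v6, v5)" using on_C(2) in_C_commute by metis
  then show ?thesis using in_C_at_most_two_neighbours[OF cs_cycle _ on_C(3) assms] f_distinct by auto
qed

lemma neighbour_v5_not_white: "(v5, y) \<in> E \<Longrightarrow> y \<noteq> v2 \<and> y \<noteq> v3"
proof (intro conjI notI)
  assume "(v5, y) \<in> E" "y = v2"
  then show False
    using longest_cycle_no_detour[OF longest sym_E on_C(1), of "[v3, v2]"]
      f_white_vertices f_distinct f_vertices_in_V f_edges edge_sym by (auto simp: path_edges_def)
next
  assume "(v5, y) \<in> E" "y = v3"
  then show False
    using longest_cycle_no_detour[OF longest sym_E on_C(1), of "[v3]"]
      f_white_vertices f_vertices_in_V f_edges edge_sym by (auto simp: path_edges_def)
qed

lemma neighbour_v6_not_white: "(v6, x) \<in> E \<Longrightarrow> x \<noteq> v2 \<and> x \<noteq> v3"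
proof (intro conjI notI)
  assume "(v6, x) \<in> E" "x = v2"
  then show False
    using longest_cycle_no_detour[OF longest sym_E on_C(3), of "[v2]"]
      f_white_vertices f_vertices_in_V f_edges edge_sym by (auto simp: path_edges_def)
next
  assume "(v6, x) \<in> E" "x = v3"
  then show False
    using longest_cycle_no_detour[OF longest sym_E on_C(3), of "[v3, v2]"]
      f_white_vertices f_distinct f_vertices_in_V f_edges edge_sym by (auto simp: path_edges_def)
qed

text \<open>D is C with its segment v4 v5 v6 v1 replaced by v4 v3 v2 v1.\<close>
lemma rerouted_longest_cycle_exists:
  "\<exists>D. longest_cycle V E D \<and> set D = set cs - {v5, v6} \<union> {v2, v3}"
proof -
  obtain r where s: "same_cycle V E cs (v4 # v5 # r)"
    using same_cycle_starting_with[OF cs_cycle sym_E on_C(1)] by blast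
  then have cyc4: "is_cycle V E (v4 # v5 # r)" unfolding same_cycle_def by blast
  obtain r1 where r: "r = v6 # r1"
    using is_cycle_next_vertex[OF cyc4, of v6] s on_C(2) f_distinct unfolding same_cycle_def by auto
  have "same_cycle V E cs (v5 # v6 # r1 @ [v4])"
    using same_cycle_trans[OF s same_cycle_rotate[OF cyc4, of 1]] r by simp
  then obtain r2 where "r1 @ [v4] = v1 # r2"
    using is_cycle_next_vertex[of V E v5 v6 "r1 @ [v4]" v1] on_C(3) f_distinct
    unfolding same_cycle_def by auto
  then obtain rest where rest: "r1 = v1 # rest" using f_distinct by (cases r1) auto
  have lc: "longest_cycle V E (v4 # [v5, v6] @ v1 # rest)"
    using longest_cycle_same_cycle[OF longest s] r rest by simp
  define D where "D = v4 # [v3, v2] @ v1 # rest"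
  have "is_cycle V E D" unfolding D_def
  proof (rule is_cycle_replace_segment)
    show "is_cycle V E (v4 # [v5, v6] @ v1 # rest)" using lc unfolding longest_cycle_def by blast
    show "set [v3, v2] \<inter> set (v4 # v1 # rest) = {}"
      using f_white_vertices s r rest unfolding same_cycle_def by auto
    show "path_edges (v4 # [v3, v2] @ [v1]) \<subseteq> E"
      using f_edges edge_sym by (auto simp: path_edges_def)
  qed (use f_distinct f_vertices_in_V in auto)
  moreover have "length D = length cs" using s r rest unfolding D_def same_cycle_def by auto
  ultimately have "longest_cycle V E D" using longest unfolding longest_cycle_def by simp
  moreover have "set D = set cs - {v5, v6} \<union> {v2, v3}"
  proof -
    have "distinct (v4 # [v5, v6] @ v1 # rest)" using lc unfolding longest_cycle_def is_cycle_def by blast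
    then show ?thesis using s r rest f_distinct unfolding D_def same_cycle_def by auto
  qed
  ultimately show ?thesis by blast
qed

text \<open>In each case of the following lemmas, the face across v5 v6 yields a detour that lengthens
  C or the rerouted cycle D.\<close>
lemma no_pentagon_across_v5v6_off_D:
  assumes D: "longest_cycle V E D" "set D = set cs - {v5, v6} \<union> {v2, v3}"
    and dist: "distinct [v6, v5, y, t, x]" and path: "path_edges [v5, y, t, x, v6] \<subseteq> E"
    and off: "y \<notin> set D" "x \<notin> set D"
  shows False
proof -
  have cycD: "is_cycle V E D" using D(1) unfolding longest_cycle_def by auto
  have e: "(v5, y) \<in> E" "(y, t) \<in> E" "(t, x) \<in> E" "(x, v6) \<in> E"
    using path by (auto simp: path_edges_def)
  have in_V: "y \<in> V" "t \<in> V" "x \<in> V" using e edge_in_V by blast+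
  have off_D: "v5 \<notin> set D" "v6 \<notin> set D" using D(2) f_distinct by auto
  show False
  proof (cases "t \<in> set D")
    case True
    have "in_C D (t, x)"
      by (rule cycle_vertex_in_C[OF cycD True _ off(1)]) (use e dist edge_sym in auto)
    then show False using off(2) in_C_imp_mem by fast
  next
    case False
    then have "y \<notin> set cs" "t \<notin> set cs" "x \<notin> set cs" using off D(2) dist by auto
    then show False
      by (intro longest_cycle_no_detour[OF longest sym_E on_C(2), of "[y, t, x]"])
         (use dist in_V e in \<open>auto simp: path_edges_def\<close>)
  qed
qed

lemma no_pentagon_across_v5v6:
  assumes D: "longest_cycle V E D" "set D = set cs - {v5, v6} \<union> {v2, v3}"
    and dist: "distinct [v6, v5, y, t, x]" and path: "path_edges [v5, y, t, x, v6] \<subseteq> E"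
  shows False
proof -
  have cycD: "is_cycle V E D" using D(1) unfolding longest_cycle_def by auto
  have e: "(v5, y) \<in> E" "(y, t) \<in> E" "(t, x) \<in> E" "(x, v6) \<in> E"
    using path by (auto simp: path_edges_def)
  have in_V: "y \<in> V" "t \<in> V" "x \<in> V" using e edge_in_V by blast+
  have off_D: "v5 \<notin> set D" "v6 \<notin> set D" using D(2) f_distinct by auto
  note facts = off_D dist in_V f_edges f_vertices_in_V e edge_sym
  have yt: "in_C D (y, t)" if yD: "y \<in> set D"
    by (rule cycle_vertex_in_C[OF cycD yD _ off_D(1)]) (use e dist edge_sym in auto)
  have tx: "in_C D (t, x)" if xD: "x \<in> set D"
  proof -
    have "in_C D (x, t)"
      by (rule cycle_vertex_in_C[OF cycD xD _ off_D(2)]) (use e dist edge_sym in auto)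
    then show ?thesis using in_C_commute by metis
  qed
  consider "y \<in> set D" "x \<in> set D" | "y \<notin> set D" "x \<in> set D" | "y \<in> set D" "x \<notin> set D"
    | "y \<notin> set D" "x \<notin> set D" by blast
  then show False
  proof cases
    case 1
    show False
      by (rule longest_cycle_no_detour_around[OF D(1) sym_E yt[OF 1(1)] tx[OF 1(2)], of "[v5, v6]"])
         (use facts in \<open>auto simp: path_edges_def\<close>)
  next
    case 2
    show False
      by (rule longest_cycle_no_detour[OF D(1) sym_E tx[OF 2(2)], of "[y, v5, v6]"])
         (use 2 facts in \<open>auto simp: path_edges_def\<close>)
  next
    case 3
    show False
      by (rule longest_cycle_no_detour[OF D(1) sym_E yt[OF 3(1)], of "[v5, v6, x]"])
         (use 3 facts in \<open>auto simp: path_edges_def\<close>)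
  next
    case 4
    show False using no_pentagon_across_v5v6_off_D[OF D dist path 4] .
  qed
qed

lemma no_hexagon_across_v5v6_off_D:
  assumes D: "longest_cycle V E D" "set D = set cs - {v5, v6} \<union> {v2, v3}"
    and dist: "distinct [v6, v5, y, s, t, x]" and path: "path_edges [v5, y, s, t, x, v6] \<subseteq> E"
    and off: "y \<notin> set D" "x \<notin> set D"
  shows False
proof -
  have cycD: "is_cycle V E D" using D(1) unfolding longest_cycle_def by auto
  have e: "(v5, y) \<in> E" "(y, s) \<in> E" "(s, t) \<in> E" "(t, x) \<in> E" "(x, v6) \<in> E"
    using path by (auto simp: path_edges_def)
  have in_V: "y \<in> V" "s \<in> V" "t \<in> V" "x \<in> V" using e edge_in_V by blast+
  have off_D: "v5 \<notin> set D" "v6 \<notin> set D" using D(2) f_distinct by auto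
  note facts = off_D dist in_V f_edges f_vertices_in_V e edge_sym
  show False
  proof (cases "s \<in> set D"; cases "t \<in> set D")
    assume sD: "s \<in> set D" and tD: "t \<in> set D"
    have "in_C D (s, t)"
      by (rule cycle_vertex_in_C[OF cycD sD _ off(1)]) (use e dist edge_sym in auto)
    then show False
      using longest_cycle_no_detour[OF D(1) sym_E, of s t "[y, v5, v6, x]"] off facts
      by (auto simp: path_edges_def)
  next
    assume sD: "s \<notin> set D" and tD: "t \<in> set D"
    have "in_C D (t, s)"
      by (rule cycle_vertex_in_C[OF cycD tD _ off(2)]) (use e dist edge_sym in auto)
    then show False using sD in_C_imp_mem by fast
  next
    assume sD: "s \<in> set D" and tD: "t \<notin> set D"
    have "in_C D (s, t)"
      by (rule cycle_vertex_in_C[OF cycD sD _ off(1)]) (use e dist edge_sym in auto)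
    then show False using tD in_C_imp_mem by fast
  next
    assume sD: "s \<notin> set D" and tD: "t \<notin> set D"
    then have "set [y, s, t, x] \<inter> set cs = {}" using off D(2) dist by auto
    then show False
      using longest_cycle_no_detour[OF longest sym_E on_C(2), of "[y, s, t, x]"] facts
      by (auto simp: path_edges_def)
  qed
qed

lemma hexagon_across_v5v6_end_imp_start_in_D:
  assumes D: "longest_cycle V E D" "set D = set cs - {v5, v6} \<union> {v2, v3}"
    and dist: "distinct [v6, v5, y, s, t, x]" and path: "path_edges [v5, y, s, t, x, v6] \<subseteq> E"
    and xD: "x \<in> set D"
  shows "y \<in> set D"
proof -
  have cycD: "is_cycle V E D" using D(1) unfolding longest_cycle_def by auto
  have e: "(v5, y) \<in> E" "(y, s) \<in> E" "(s, t) \<in> E" "(t, x) \<in> E" "(x, v6) \<in> E"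
    using path by (auto simp: path_edges_def)
  have in_V: "y \<in> V" "s \<in> V" "t \<in> V" "x \<in> V" using e edge_in_V by blast+
  have off_D: "v5 \<notin> set D" "v6 \<notin> set D" using D(2) f_distinct by auto
  note facts = off_D dist in_V f_edges f_vertices_in_V e edge_sym
  have "in_C D (x, t)"
    by (rule cycle_vertex_in_C[OF cycD xD _ off_D(2)]) (use e dist edge_sym in auto)
  then have tx: "in_C D (t, x)" using in_C_commute by metis
  show ?thesis
  proof (rule ccontr)
    assume yD: "y \<notin> set D"
    show False
    proof (cases "s \<in> set D")
      case True
      have "in_C D (s, t)"
        by (rule cycle_vertex_in_C[OF cycD True _ yD]) (use e dist edge_sym in auto)
      then show False
        using longest_cycle_no_detour_around[OF D(1) sym_E _ tx, of s "[y, v5, v6]"] yD facts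
        by (auto simp: path_edges_def)
    next
      case False
      then show False
        using longest_cycle_no_detour[OF D(1) sym_E tx, of "[s, y, v5, v6]"] yD facts
        by (auto simp: path_edges_def)
    qed
  qed
qed

lemma hexagon_across_v5v6_start_imp_end_in_D:
  assumes D: "longest_cycle V E D" "set D = set cs - {v5, v6} \<union> {v2, v3}"
    and dist: "distinct [v6, v5, y, s, t, x]" and path: "path_edges [v5, y, s, t, x, v6] \<subseteq> E"
    and yD: "y \<in> set D"
  shows "x \<in> set D"
proof -
  have cycD: "is_cycle V E D" using D(1) unfolding longest_cycle_def by auto
  have e: "(v5, y) \<in> E" "(y, s) \<in> E" "(s, t) \<in> E" "(t, x) \<in> E" "(x, v6) \<in> E"
    using path by (auto simp: path_edges_def)
  have in_V: "y \<in> V" "s \<in> V" "t \<in> V" "x \<in> V" using e edge_in_V by blast+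
  have off_D: "v5 \<notin> set D" "v6 \<notin> set D" using D(2) f_distinct by auto
  note facts = off_D dist in_V f_edges f_vertices_in_V e edge_sym
  have ys: "in_C D (y, s)"
    by (rule cycle_vertex_in_C[OF cycD yD _ off_D(1)]) (use e dist edge_sym in auto)
  show ?thesis
  proof (rule ccontr)
    assume xD: "x \<notin> set D"
    show False
    proof (cases "t \<in> set D")
      case True
      have "in_C D (t, s)"
        by (rule cycle_vertex_in_C[OF cycD True _ xD]) (use e dist edge_sym in auto)
      then have "in_C D (s, t)" using in_C_commute by metis
      then show False
        using longest_cycle_no_detour_around[OF D(1) sym_E ys, of t "[v5, v6, x]"] xD facts
        by (auto simp: path_edges_def)
    next
      case False
      then show False
        using longest_cycle_no_detour[OF D(1) sym_E ys, of "[v5, v6, x, t]"] xD facts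
        by (auto simp: path_edges_def)
    qed
  qed
qed

lemma hexagon_across_v5v6_on_C:
  assumes D: "longest_cycle V E D" "set D = set cs - {v5, v6} \<union> {v2, v3}"
    and dist: "distinct [v6, v5, y, s, t, x]" and path: "path_edges [v5, y, s, t, x, v6] \<subseteq> E"
    and "y \<noteq> v4" "x \<noteq> v1"
  shows "set [y, s, t, x] \<subseteq> set cs"
proof -
  have e: "(v5, y) \<in> E" "(y, s) \<in> E" "(s, t) \<in> E" "(t, x) \<in> E" "(x, v6) \<in> E"
    using path by (auto simp: path_edges_def)
  have "y \<in> set D" "x \<in> set D"
    using no_hexagon_across_v5v6_off_D[OF D dist path] hexagon_across_v5v6_end_imp_start_in_D[OF D dist path]
      hexagon_across_v5v6_start_imp_end_in_D[OF D dist path] by blast+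
  moreover have "y \<noteq> v2" "y \<noteq> v3" "x \<noteq> v2" "x \<noteq> v3"
    using neighbour_v5_not_white[OF e(1)] neighbour_v6_not_white edge_sym[OF e(5)] by auto
  ultimately have yC: "y \<in> set cs" and xC: "x \<in> set cs" using D(2) by auto
  have sC: "s \<in> set cs"
  proof (rule ccontr)
    assume "s \<notin> set cs"
    then have "in_C cs (y, v5)"
      by (intro cycle_vertex_in_C[OF cs_cycle yC e(2)]) (use e dist edge_sym in auto)
    then show False using C_neighbours_v5 in_C_commute assms(5) dist by fastforce
  qed
  have tC: "t \<in> set cs"
  proof (rule ccontr)
    assume "t \<notin> set cs"
    then have "in_C cs (x, v6)"
      by (intro cycle_vertex_in_C[OF cs_cycle xC edge_sym[OF e(4)]]) (use e dist in auto)
    then show False using C_neighbours_v6 in_C_commute assms(6) dist by fastforce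
  qed
  show ?thesis using yC sC tC xC by simp
qed

text \<open>The face h = face_of rot (v6, v5) is the face f_{5,6} of the paper, across the edge v5 v6;
  it is the only face that f pays.\<close>
abbreviation h_walk :: "nat \<Rightarrow> 'a" where
  "h_walk \<equiv> face_walk rot (v6, v5)"

lemma h_dart: "(v6, v5) \<in> E"
  using f_edges(5) edge_sym by blast

lemma h_walk_0_1: "h_walk 0 = v6" "h_walk 1 = v5"
  using phi_pow_eq_face_walk[of 0 rot "(v6, v5)"] by simp_all

lemma h_walk_wrap: "h_walk (face_period rot (v6, v5)) = v6" "h_walk (Suc (face_period rot (v6, v5))) = v5"
  using face_walk_periodic[OF h_dart, of 0] face_walk_periodic[OF h_dart, of 1] h_walk_0_1
  by (simp_all add: add.commute)

lemma h_face_period: "face_period rot (v6, v5) = 6"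
proof -
  let ?p = "face_period rot (v6, v5)"
  have p: "?p \<in> {5, 6}"
    using fullerene_face_size[OF fullerene h_dart] card_face_of[OF h_dart] by simp
  obtain D where D: "longest_cycle V E D" "set D = set cs - {v5, v6} \<union> {v2, v3}"
    using rerouted_longest_cycle_exists by blast
  have "?p \<noteq> 5"
  proof
    assume p5: "?p = 5"
    have "map h_walk [0..<5] = [h_walk 0, h_walk 1, h_walk 2, h_walk 3, h_walk 4]"
      "map h_walk [1..<6] = [h_walk 1, h_walk 2, h_walk 3, h_walk 4, h_walk 5]"
      by (simp_all add: upt_rec numeral_eq_Suc)
    then have "distinct [v6, v5, h_walk 2, h_walk 3, h_walk 4]"
      "path_edges [v5, h_walk 2, h_walk 3, h_walk 4, v6] \<subseteq> E"
      using distinct_face_walk[OF h_dart p] path_edges_face_walk[OF h_dart, of 1 6] h_walk_0_1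
        h_walk_wrap(1) p5 by simp_all
    then show False using no_pentagon_across_v5v6[OF D] by blast
  qed
  then show ?thesis using p by simp
qed

lemma h_walk_2: "h_walk 2 = rot v5 v6"
  using face_walk_Suc_Suc[of rot "(v6, v5)" 0] h_walk_0_1 by (simp add: numeral_2_eq_2)

lemma h_walk_2_neq_v4: "h_walk 2 \<noteq> v4"
proof -
  have "h_walk 2 = rot v5 (rot v5 v4)" using h_walk_2 rot_f(4) by simp
  moreover have "v4 \<in> nbrs E v5" using edge_sym[OF f_edges(4)] by (simp add: mem_nbrs_iff)
  ultimately show ?thesis using rot_rot_neq[OF f_vertices_in_V(5)] by simp
qed

lemma h_walk_5_neq_v1: "h_walk 5 \<noteq> v1"
proof
  assume x: "h_walk 5 = v1"
  have "h_walk 7 = rot (h_walk 6) (h_walk 5)"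
    using face_walk_Suc_Suc[of rot "(v6, v5)" 5] by (simp add: eval_nat_numeral)
  moreover have "h_walk 6 = v6" "h_walk 7 = v5"
    using h_walk_wrap h_face_period by (simp_all add: eval_nat_numeral)
  ultimately have "rot v6 (rot v6 v5) = v5" using x rot_f(5) by metis
  moreover have "v5 \<in> nbrs E v6" using f_edges(5) edge_sym by (simp add: mem_nbrs_iff)
  ultimately show False using rot_rot_neq[OF f_vertices_in_V(6)] by blast
qed

lemma h_black: "black_face cs (face_of rot (v6, v5))"
proof -
  obtain D where D: "longest_cycle V E D" "set D = set cs - {v5, v6} \<union> {v2, v3}"
    using rerouted_longest_cycle_exists by blast
  have walk: "map h_walk [0..<6] = [v6, v5, h_walk 2, h_walk 3, h_walk 4, h_walk 5]"
    "map h_walk [1..<7] = [v5, h_walk 2, h_walk 3, h_walk 4, h_walk 5, v6]"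
    using h_walk_0_1 h_walk_wrap(1) h_face_period by (simp_all add: upt_rec eval_nat_numeral)
  have "distinct [v6, v5, h_walk 2, h_walk 3, h_walk 4, h_walk 5]"
    using distinct_face_walk[OF h_dart] h_face_period walk(1) by simp
  moreover have "path_edges [v5, h_walk 2, h_walk 3, h_walk 4, h_walk 5, v6] \<subseteq> E"
    using path_edges_face_walk[OF h_dart, of 1 7] unfolding walk(2) .
  ultimately have "set [h_walk 2, h_walk 3, h_walk 4, h_walk 5] \<subseteq> set cs"
    using hexagon_across_v5v6_on_C[OF D _ _ h_walk_2_neq_v4 h_walk_5_neq_v1] by blast
  moreover have "face_vertices (face_of rot (v6, v5)) = set (map h_walk [0..<6])"
    unfolding face_vertices_def face_of_eq_image[OF h_dart] h_face_period face_walk_def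
    by (auto simp: image_image)
  ultimately have "{v \<in> face_vertices (face_of rot (v6, v5)). v \<notin> set cs} = {}"
    using walk(1) f_black_vertices by auto
  then show ?thesis unfolding black_face_def white_count_def by (simp only: card.empty)
qed

lemma rules_charge_v5v4: "(phi rot ^^ 6) (v5, v4) = (v5, v4) \<Longrightarrow> rules_charge rot cs (v5, v4) = 0"
proof -
  assume p6: "(phi rot ^^ 6) (v5, v4) = (v5, v4)"
  obtain p where prv: "(phi rot ^^ 5) (v5, v4) = (p, v5)" "rot v5 p = v4"
    using prev_dart[OF edge_sym[OF f_edges(4)] p6] by auto
  have n: "v3 \<in> nbrs E v4" "v5 \<in> nbrs E v4" using f_edges(3,4) edge_sym by (auto simp: mem_nbrs_iff)
  have "rot v4 v5 \<in> nbrs E v4" using rot_in_nbrs[OF f_vertices_in_V(4) n(2)] .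
  moreover have "rot v4 v5 \<noteq> v3" using rot_rot_neq[OF f_vertices_in_V(4) n(1)] rot_f(3) by simp
  ultimately have "in_C cs (v4, rot v4 v5)"
    using cycle_vertex_in_C[OF cs_cycle f_black_vertices(2) _ f_white_vertices(2)] f_edges(3) edge_sym
    by (auto simp: mem_nbrs_iff)
  moreover have "\<not> in_C cs (p, v5)"
  proof
    assume "in_C cs (p, v5)"
    then have "p = v4 \<or> p = v6" using C_neighbours_v5 in_C_commute by metis
    then show False
    proof
      assume "p = v4" then show False using prv(2) rot_f(4) f_distinct by simp
    next
      assume "p = v6" then show False using prv(2) h_walk_2 h_walk_2_neq_v4 by simp
    qed
  qed
  ultimately show ?thesis using prv unfolding rules_charge_def by (simp add: Let_def phi_def)
qed

lemma rules_charge_v6v5: "(phi rot ^^ 6) (v6, v5) = (v6, v5) \<Longrightarrow> rules_charge rot cs (v6, v5) = 1"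
proof -
  assume p6: "(phi rot ^^ 6) (v6, v5) = (v6, v5)"
  obtain p where prv: "(phi rot ^^ 5) (v6, v5) = (p, v6)" "rot v6 p = v5"
    using prev_dart[OF h_dart p6] by auto
  have n: "v6 \<in> nbrs E v5" "v5 \<in> nbrs E v6" using f_edges(5) edge_sym by (auto simp: mem_nbrs_iff)
  have "in_C cs (v6, v5)" using on_C(2) in_C_commute by metis
  moreover have "\<not> in_C cs (v5, rot v5 v6)"
  proof
    assume "in_C cs (v5, rot v5 v6)"
    then show False
      using C_neighbours_v5 h_walk_2 h_walk_2_neq_v4 rot_neq[OF f_vertices_in_V(5) n(1)] by metis
  qed
  moreover have "\<not> in_C cs (p, v6)"
  proof
    assume "in_C cs (p, v6)"
    then have "p = v5 \<or> p = v1" using C_neighbours_v6 in_C_commute by metis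
    then show False
    proof
      assume "p = v5" then show False using prv(2) rot_f(5) f_distinct by simp
    next
      assume "p = v1" then show False using prv(2) rot_f(5) rot_rot_neq[OF f_vertices_in_V(6) n(2)] by simp
    qed
  qed
  ultimately show ?thesis using prv unfolding rules_charge_def by (simp add: Let_def phi_def)
qed

lemma rules_charge_v1v6: "(phi rot ^^ 6) (v1, v6) = (v1, v6) \<Longrightarrow> rules_charge rot cs (v1, v6) = 0"
proof -
  assume p6: "(phi rot ^^ 6) (v1, v6) = (v1, v6)"
  obtain p where prv: "(phi rot ^^ 5) (v1, v6) = (p, v1)" "rot v1 p = v6" "(p, v1) \<in> E"
    using prev_dart[OF edge_sym[OF f_edges(6)] p6] by auto
  have n: "v1 \<in> nbrs E v6" "v5 \<in> nbrs E v6" "v6 \<in> nbrs E v1"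
    using f_edges(5,6) edge_sym by (auto simp: mem_nbrs_iff)
  have "\<not> in_C cs (v6, rot v6 v1)"
  proof
    assume "in_C cs (v6, rot v6 v1)"
    then show False
      using C_neighbours_v6 rot_neq[OF f_vertices_in_V(6) n(1)]
        rot_rot_neq[OF f_vertices_in_V(6) n(2)] rot_f(5) by metis
  qed
  moreover have "in_C cs (p, v1)"
  proof -
    have "in_C cs (v1, p)"
    proof (rule cycle_vertex_in_C[OF cs_cycle f_black_vertices(1) f_edges(1) f_white_vertices(1)])
      show "(v1, p) \<in> E" using prv(3) edge_sym by blast
      show "p \<noteq> v2" using prv(2) rot_f(6) rot_rot_neq[OF f_vertices_in_V(1) n(3)] by auto
    qed
    then show ?thesis using in_C_commute by metis
  qed
  ultimately show ?thesis using prv unfolding rules_charge_def by (simp add: Let_def phi_def)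
qed

lemma rules_charge_across_f:
  assumes d: "d \<in> E" and p6: "(phi rot ^^ 6) d = d" and across: "(snd d, fst d) \<in> f"
  shows "rules_charge rot cs d = (if d = (v6, v5) then 1 else 0)"
proof -
  from across consider "d = (v2, v1)" | "d = (v3, v2)" | "d = (v4, v3)"
    | "d = (v5, v4)" | "d = (v6, v5)" | "d = (v1, v6)"
    unfolding f_darts by (cases d) auto
  moreover have "\<not> in_C cs (v2, v1)" "\<not> in_C cs (v3, v2)" "\<not> in_C cs (v4, v3)"
    using in_C_imp_mem[of cs v2 v1] in_C_imp_mem[of cs v3 v2] in_C_imp_mem[of cs v4 v3]
      f_white_vertices by auto
  ultimately show ?thesis
    using rules_charge_not_in_C rules_charge_v5v4 rules_charge_v6v5 rules_charge_v1v6 p6 f_distinct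
    by cases auto
qed

lemma recv_from_f:
  assumes g: "g \<in> faces E rot"
  shows "recv rot cs g f = (if black_face cs g \<and> card g = 6 \<and> (v6, v5) \<in> g then 1 else 0)"
proof (cases "black_face cs g \<and> card g = 6")
  case True
  obtain e where e: "e \<in> E" "g = face_of rot e" using g unfolding faces_def by auto
  have summand: "(if face_of rot (snd d, fst d) = f \<and> white_face cs f then rules_charge rot cs d else 0)
      = (if d = (v6, v5) then 1 else 0)" if "d \<in> g" for d
  proof -
    have dE: "d \<in> E" using face_of_subset_E[OF e(1)] e(2) that by auto
    have "card (face_of rot d) = 6" using face_of_eq_if_mem[OF e(1)] e(2) that True by simp
    then have p6: "(phi rot ^^ 6) d = d" using face_period(2)[OF dE] card_face_of[OF dE] by simp
    have across: "face_of rot (snd d, fst d) = f \<longleftrightarrow> (snd d, fst d) \<in> f"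
    proof
      assume "face_of rot (snd d, fst d) = f"
      then show "(snd d, fst d) \<in> f" using self_in_face_of[of "(snd d, fst d)" rot] by simp
    qed (rule face_of_eq_if_mem[OF f_dart])
    show ?thesis
    proof (cases "(snd d, fst d) \<in> f")
      case True
      then show ?thesis using across rules_charge_across_f[OF dE p6] f_white by simp
    next
      case False
      moreover have "d \<noteq> (v6, v5)" using False unfolding f_darts by auto
      ultimately show ?thesis using across by simp
    qed
  qed
  have "recv rot cs g f = (\<Sum>d\<in>g. if d = (v6, v5) then 1 else 0)"
    using recv_black_hexagon[OF True[THEN conjunct1] True[THEN conjunct2]] summand by simp
  also have "\<dots> = (if (v6, v5) \<in> g then 1 else 0)"
    using finite_face_of[OF e(1)] e(2) by simp
  finally show ?thesis using True by simp
next
  case False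
  then have "\<not> (black_face cs g \<and> card g = 6 \<and> (v6, v5) \<in> g)" by blast
  then show ?thesis unfolding recv_def by (simp only: if_not_P[OF False] if_not_P if_False)
qed

lemma final_charge_f: "final_charge E rot cs f = 1"
proof -
  let ?h = "face_of rot (v6, v5)"
  have "\<not> black_face cs f" using f_white unfolding white_face_def black_face_def by simp
  then have received: "(\<Sum>g\<in>faces E rot. recv rot cs f g) = 0" unfolding recv_def by simp
  have "recv rot cs g f = (if g = ?h then 1 else 0)" if g: "g \<in> faces E rot" for g
  proof -
    obtain e where e: "e \<in> E" "g = face_of rot e" using g unfolding faces_def by auto
    have "(v6, v5) \<in> g \<longleftrightarrow> g = ?h" using face_of_eq_if_mem[OF e(1)] e(2) self_in_face_of by metis
    then show ?thesis using recv_from_f[OF g] h_black h_face_period card_face_of[OF h_dart] by auto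
  qed
  then have "(\<Sum>g\<in>faces E rot. recv rot cs g f) = (\<Sum>g\<in>faces E rot. if g = ?h then 1 else 0)"
    by (intro sum.cong) auto
  also have "\<dots> = 1" using finite_E h_dart unfolding faces_def by simp
  finally show ?thesis using received f_white unfolding final_charge_def white_face_def by simp
qed

end

theorem lemma4:
  fixes V :: "'a set" and E :: "('a \<times> 'a) set" and rot :: "'a \<Rightarrow> 'a \<Rightarrow> 'a"
    and cs :: "'a list" and f :: "('a \<times> 'a) set" and vs :: "'a list"
  assumes "fullerene V E rot"
    and "longest_cycle V E cs"
    and "f \<in> faces E rot"
    and "white_face cs f"
    and "card f = 6"
    and "length vs = 6"
    and "f = face_of rot (vs ! 0, vs ! 1)"
    and "\<forall>i<6. phi rot (vs ! i, vs ! ((i + 1) mod 6)) = (vs ! ((i + 1) mod 6), vs ! ((i + 2) mod 6))"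
    and "in_C cs (vs ! 3, vs ! 4)"
    and "in_C cs (vs ! 4, vs ! 5)"
    and "in_C cs (vs ! 5, vs ! 0)"
  shows "final_charge E rot cs f = 1"
proof -
  obtain v1 v2 v3 v4 v5 v6 where vs: "vs = [v1, v2, v3, v4, v5, v6]"
  proof -
    have "vs = [vs ! 0, vs ! 1, vs ! 2, vs ! 3, vs ! 4, vs ! 5]"
      by (rule nth_equalityI) (use assms(6) in \<open>auto simp: less_Suc_eq numeral_eq_Suc\<close>)
    then show ?thesis by (rule that)
  qed
  obtain e where e: "e \<in> E" "f = face_of rot e" using assms(3) unfolding faces_def by auto
  have "(v1, v2) \<in> E"
    using cubic_map.face_of_subset_E[OF fullerene_cubic_map[OF assms(1)] e(1)] e(2)
      self_in_face_of assms(7) vs by fastforce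
  moreover have "rot v2 v1 = v3" "rot v3 v2 = v4" "rot v4 v3 = v5"
    "rot v5 v4 = v6" "rot v6 v5 = v1" "rot v1 v6 = v2"
    using assms(8)[rule_format, of 0] assms(8)[rule_format, of 1] assms(8)[rule_format, of 2]
      assms(8)[rule_format, of 3] assms(8)[rule_format, of 4] assms(8)[rule_format, of 5]
    unfolding vs by (simp_all add: phi_def)
  ultimately interpret white_hexagon V E rot cs v1 v2 v3 v4 v5 v6
    using assms unfolding vs by unfold_locales simp_all
  show ?thesis using final_charge_f assms(7) vs by simp
qed

end
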